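(* Consider NEAR-DGD$^+$: $\mathbf{x}_k=\mathbf{Z}^{t(k)}\mathbf{y}_k$, $\mathbf{y}_{k+1}=\mathbf{x}_k-\alpha\nabla\mathbf{f}(\mathbf{x}_k)$, $k=0,1,2,\ldots$, for a sequence of nonnegative integers $t(k)$, started from a common point $y_{i,0}=s_0$. Suppose each $f_i$ is $\mu_i$-strongly convex with $L_i$-Lipschitz gradient, $x^\star$ is the minimizer of $h=\sum_if_i$, and $0<\alpha\le\min\{1/L,c_4\}$. Then for every $\delta>0$ and all $k=0,1,2,\ldots$, $$\|\bar x_{k+1}-x^\star\|^2\le c_1^2\|\bar x_k-x^\star\|^2+c_3^2\beta^{2t(k)},$$ with $c_1^2=1-\alpha c_2+\alpha\delta-\alpha^2\delta c_2$ and $c_3^2=\alpha(\alpha+\delta^{-1})D^2L^2$. Moreover, if $\alpha c_2<1$ and $\{t(k)\}$ is strictly increasing with $t(k)\to\infty$, then $\bar x_k\to x^\star$ and $x_{i,k}\to x^\star$ for every $i$.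
   Context: $\mathbf{Z}=\mathbf{W}\otimes I_p$ with $\mathbf{W}$ a symmetric doubly-stochastic $n\times n$ matrix of a connected network ($w_{ii}>0$, $w_{ij}>0$ iff neighbours), simple eigenvalue $1$, other eigenvalues in $(-1,1)$; $\beta\in(0,1)$ its second largest eigenvalue magnitude. $\mathbf{x}=(x_1;\ldots;x_n)$, $\nabla\mathbf{f}(\mathbf{x})=(\nabla f_1(x_1);\ldots;\nabla f_n(x_n))$, $\bar x_k=\frac1n\sum_ix_{i,k}$. Constants: $L=\max_iL_i$, $\mu_{\bar f}=\frac1n\sum_i\mu_i$, $L_{\bar f}=\frac1n\sum_iL_i$, $c_2=\frac{2\mu_{\bar f}L_{\bar f}}{\mu_{\bar f}+L_{\bar f}}$, $c_4=\frac{2}{\mu_{\bar f}+L_{\bar f}}$, $D=\|\mathbf{y}_0-\mathbf{u}^\star\|+\frac{\nu+4}{\nu}\|\mathbf{u}^\star\|$, $\mathbf{u}^\star=(\arg\min f_1;\ldots;\arg\min f_n)$, $\nu=2\alpha\min_i\frac{\mu_iL_i}{\mu_i+L_i}$. *)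

theory Defs
  imports "HOL-Analysis.Analysis"
begin

primrec matpow :: "real^'n^'n \<Rightarrow> nat \<Rightarrow> real^'n^'n" where
  "matpow W 0 = mat 1"
| "matpow W (Suc k) = W ** matpow W k"

definition strongly_convex_on :: "'a::real_inner set \<Rightarrow> real \<Rightarrow> ('a \<Rightarrow> real) \<Rightarrow> bool" where
  "strongly_convex_on S mu f \<longleftrightarrow> convex_on S (\<lambda>x. f x - mu / 2 * (norm x)\<^sup>2)"

definition mat_eigenvalue :: "real^'n^'n \<Rightarrow> real \<Rightarrow> bool" where
  "mat_eigenvalue W lam \<longleftrightarrow> (\<exists>v. v \<noteq> 0 \<and> W *v v = lam *s v)"

text \<open>Averaging multiplier Z^t y = (W^t \<otimes> I_p) y, agentwise.\<close>
definition kron_apply :: "real^'n^'n \<Rightarrow> ('n \<Rightarrow> 'a::real_vector) \<Rightarrow> ('n \<Rightarrow> 'a)" where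
  "kron_apply M y = (\<lambda>i. \<Sum>j\<in>UNIV. (M $ i $ j) *\<^sub>R y j)"

definition stack_norm :: "('n::finite \<Rightarrow> 'a::real_normed_vector) \<Rightarrow> real" where
  "stack_norm x = sqrt (\<Sum>i\<in>UNIV. (norm (x i))\<^sup>2)"

definition avg :: "('n::finite \<Rightarrow> 'a::real_vector) \<Rightarrow> 'a" where
  "avg x = (1 / real CARD('n)) *\<^sub>R (\<Sum>i\<in>UNIV. x i)"

end

theory Submission
  imports Defs
begin

text \<open>
  Averaging with a doubly stochastic matrix preserves the network mean, so the mean of the
  \<open>x\<^sub>k\<close> performs a gradient step for \<open>h/n\<close> that is inexact only because the local gradients
  are evaluated at the agents' iterates instead of at the mean.  The exact step contracts by
  \<open>1 - \<alpha> c\<^sub>2\<close>, since \<open>h/n\<close> is \<open>\<mu>\<^sub>f\<close>-strongly convex with \<open>L\<^sub>f\<close>-Lipschitz gradient; the error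
  is at most \<open>\<alpha> L\<close> times the consensus error.  After \<open>t(k)\<close> averaging rounds the consensus
  error is at most \<open>\<beta>^t(k)\<close> times the norm of the stacked \<open>y\<^sub>k\<close>, and that norm stays below
  \<open>D\<close> because averaging is nonexpansive while each local gradient step contracts towards the
  local minimiser \<open>u\<^sub>i\<^sup>\<star>\<close> by the factor \<open>1 - \<nu>\<close>.  Young's inequality with weight \<open>\<alpha> \<delta>\<close>
  combines the two estimates.  When \<open>t(k) \<rightarrow> \<infinity>\<close> the perturbation vanishes, and the
  contraction drives the mean, and with it every agent, to \<open>x\<^sup>\<star>\<close>.
\<close>

section \<open>Smooth strongly convex functions\<close>

lemma power2_norm_add:
  fixes u v :: "'a::real_inner"
  shows "(norm (u + v))\<^sup>2 = (norm u)\<^sup>2 + 2 * (u \<bullet> v) + (norm v)\<^sup>2"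
  unfolding power2_norm_eq_inner by (simp add: inner_add_left inner_add_right inner_commute)

lemma power2_norm_diff:
  fixes u v :: "'a::real_inner"
  shows "(norm (u - v))\<^sup>2 = (norm u)\<^sup>2 - 2 * (u \<bullet> v) + (norm v)\<^sup>2"
  unfolding power2_norm_eq_inner by (simp add: inner_diff_left inner_diff_right inner_commute)

lemma power2_norm_diff_scaleR:
  fixes u v :: "'a::real_inner"
  shows "(norm (u - a *\<^sub>R v))\<^sup>2 = (norm u)\<^sup>2 - 2 * a * (u \<bullet> v) + a\<^sup>2 * (norm v)\<^sup>2"
  unfolding power2_norm_diff by (simp add: power_mult_distrib)

lemma power2_norm_diff_le_young:
  fixes a e :: "'a::real_inner"
  assumes s: "0 < s"
  shows "(norm (a - e))\<^sup>2 \<le> (1 + s) * (norm a)\<^sup>2 + (1 + 1 / s) * (norm e)\<^sup>2"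
proof -
  have "- (a \<bullet> e) \<le> norm a * norm e"
    using norm_cauchy_schwarz[of a "-e"] by simp
  moreover have "2 * (norm a * norm e) \<le> s * (norm a)\<^sup>2 + (norm e)\<^sup>2 / s"
  proof -
    have "2 * s * (norm a * norm e) \<le> (s * norm a)\<^sup>2 + (norm e)\<^sup>2"
      using sum_squares_bound[of "s * norm a" "norm e"] by (simp add: algebra_simps)
    then show ?thesis
      using s by (simp add: field_simps power2_eq_square)
  qed
  ultimately show ?thesis
    unfolding power2_norm_diff by (simp add: algebra_simps)
qed

lemma has_field_derivative_along_line:
  fixes f :: "'a::real_inner \<Rightarrow> real"
  assumes "\<And>z. (f has_derivative (\<lambda>h. G z \<bullet> h)) (at z)"
  shows "((\<lambda>s. f (x + s *\<^sub>R d)) has_field_derivative (G (x + t *\<^sub>R d) \<bullet> d)) (at t within S)"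
proof -
  have "((\<lambda>s. x + s *\<^sub>R d) has_derivative (\<lambda>s. s *\<^sub>R d)) (at t within S)"
    by (auto intro!: derivative_eq_intros)
  from has_derivative_compose[OF this assms]
  show ?thesis
    unfolding has_field_derivative_def by (rule has_derivative_eq_rhs) (auto simp: fun_eq_iff)
qed

lemma convex_on_imp_above_tangent_gradient:
  fixes \<phi> :: "'a::real_inner \<Rightarrow> real"
  assumes cv: "convex_on UNIV \<phi>" and d: "\<And>z. (\<phi> has_derivative (\<lambda>h. G z \<bullet> h)) (at z)"
  shows "\<phi> x + G x \<bullet> (y - x) \<le> \<phi> y"
proof -
  define \<psi> where "\<psi> s = \<phi> (x + s *\<^sub>R (y - x))" for s :: real
  have "convex_on UNIV \<psi>"
    unfolding \<psi>_def convex_on_def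
  proof (intro conjI allI impI ballI)
    fix a b u v :: real assume uv: "0 \<le> u" "0 \<le> v" "u + v = 1"
    have "x + (u * a + v * b) *\<^sub>R (y - x) = u *\<^sub>R (x + a *\<^sub>R (y - x)) + v *\<^sub>R (x + b *\<^sub>R (y - x))"
      using uv by (simp add: algebra_simps flip: scaleR_add_left)
    then show "\<phi> (x + (u *\<^sub>R a + v *\<^sub>R b) *\<^sub>R (y - x))
        \<le> u * \<phi> (x + a *\<^sub>R (y - x)) + v * \<phi> (x + b *\<^sub>R (y - x))"
      using cv uv unfolding convex_on_def by simp
  qed simp
  moreover have "(\<psi> has_field_derivative (G x \<bullet> (y - x))) (at 0 within UNIV)"
    unfolding \<psi>_def using has_field_derivative_along_line[OF d, of x "y - x" 0 UNIV] by simp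
  ultimately have "G x \<bullet> (y - x) \<le> \<psi> 1 - \<psi> 0"
    using convex_on_imp_above_tangent[of UNIV \<psi> 0 1] by simp
  then show ?thesis unfolding \<psi>_def by simp
qed

lemma descent_lemma:
  fixes f :: "'a::real_inner \<Rightarrow> real"
  assumes d: "\<And>z. (f has_derivative (\<lambda>h. G z \<bullet> h)) (at z)"
    and lip: "\<And>z w. norm (G z - G w) \<le> L * norm (z - w)"
  shows "f y \<le> f x + G x \<bullet> (y - x) + L / 2 * (norm (y - x))\<^sup>2"
proof -
  define d where "d = y - x"
  define \<psi> where "\<psi> s = f (x + s *\<^sub>R d) - s * (G x \<bullet> d) - L / 2 * s\<^sup>2 * (norm d)\<^sup>2" for s :: real
  have "\<psi> 1 \<le> \<psi> 0"
  proof (rule DERIV_nonpos_imp_nonincreasing[where f = \<psi>])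
    fix s :: real assume s: "0 \<le> s" "s \<le> 1"
    have \<psi>': "DERIV \<psi> s :> (G (x + s *\<^sub>R d) \<bullet> d - G x \<bullet> d - L / 2 * (2 * s) * (norm d)\<^sup>2)"
      unfolding \<psi>_def by (rule has_field_derivative_along_line[OF assms(1)] derivative_eq_intros refl | simp)+
    have "G (x + s *\<^sub>R d) \<bullet> d - G x \<bullet> d = (G (x + s *\<^sub>R d) - G x) \<bullet> d"
      by (simp add: inner_diff_left)
    also have "\<dots> \<le> norm (G (x + s *\<^sub>R d) - G x) * norm d" by (rule norm_cauchy_schwarz)
    also have "\<dots> \<le> L * norm (s *\<^sub>R d) * norm d"
      using lip[of "x + s *\<^sub>R d" x] by (simp add: mult_right_mono)
    also have "\<dots> = L * s * (norm d)\<^sup>2" using s by (simp add: power2_eq_square)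
    finally show "\<exists>y. DERIV \<psi> s :> y \<and> y \<le> 0" using \<psi>' by auto
  qed simp
  then show ?thesis unfolding \<psi>_def d_def by simp
qed

lemma convex_smooth_gradient_gap:
  fixes \<phi> :: "'a::real_inner \<Rightarrow> real"
  assumes lower: "\<And>z w. \<phi> z + G z \<bullet> (w - z) \<le> \<phi> w"
    and upper: "\<And>z w. \<phi> w \<le> \<phi> z + G z \<bullet> (w - z) + M / 2 * (norm (w - z))\<^sup>2"
    and M: "0 < M"
  shows "\<phi> a - \<phi> b + G a \<bullet> (b - a) \<le> - (norm (G b - G a))\<^sup>2 / (2 * M)"
proof -
  \<comment> \<open>Compare the lower bound at \<open>a\<close> with the upper bound at \<open>b\<close>, both evaluated at the
    gradient step \<open>z\<close> from \<open>b\<close> for the difference of the gradients.\<close>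
  define v where "v = G b - G a"
  define z where "z = b - (1 / M) *\<^sub>R v"
  have "\<phi> a + G a \<bullet> (z - a) \<le> \<phi> b + G b \<bullet> (z - b) + M / 2 * (norm (z - b))\<^sup>2"
    using lower[of a z] upper[of z b] by linarith
  moreover have "G a \<bullet> (z - a) = G a \<bullet> (b - a) + G a \<bullet> (z - b)"
    by (simp add: inner_diff_right)
  moreover have "G b \<bullet> (z - b) - G a \<bullet> (z - b) = - (norm v)\<^sup>2 / M"
    by (simp add: z_def v_def inner_diff_left power2_norm_eq_inner diff_divide_distrib)
  moreover have "M / 2 * (norm (z - b))\<^sup>2 = (norm v)\<^sup>2 / (2 * M)"
    using M by (simp add: z_def power2_eq_square field_simps)
  ultimately have "\<phi> a - \<phi> b + G a \<bullet> (b - a) \<le> - (norm v)\<^sup>2 / M + (norm v)\<^sup>2 / (2 * M)"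
    by linarith
  also have "\<dots> = - (norm v)\<^sup>2 / (2 * M)" using M by (simp add: field_simps)
  finally show ?thesis by (simp add: v_def)
qed

lemma convex_smooth_gradient_cocoercive:
  fixes \<phi> :: "'a::real_inner \<Rightarrow> real"
  assumes lower: "\<And>z w. \<phi> z + G z \<bullet> (w - z) \<le> \<phi> w"
    and upper: "\<And>z w. \<phi> w \<le> \<phi> z + G z \<bullet> (w - z) + M / 2 * (norm (w - z))\<^sup>2"
    and M: "0 \<le> M"
  shows "(norm (G y - G x))\<^sup>2 \<le> M * ((G y - G x) \<bullet> (y - x))"
proof -
  define a where "a = (G y - G x) \<bullet> (y - x)"
  have inner_swap: "G x \<bullet> (y - x) + G y \<bullet> (x - y) = - a"
    by (simp add: a_def inner_diff_left inner_diff_right inner_commute)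
  have a0: "0 \<le> a"
    using lower[of x y] lower[of y x] inner_swap by linarith
  have upper': "\<phi> w \<le> \<phi> z + G z \<bullet> (w - z) + M' / 2 * (norm (w - z))\<^sup>2" if "M \<le> M'" for z w M'
  proof -
    have "M / 2 * (norm (w - z))\<^sup>2 \<le> M' / 2 * (norm (w - z))\<^sup>2"
      using that by (intro mult_right_mono) auto
    then show ?thesis using upper[of w z] by linarith
  qed
  have bound: "(norm (G y - G x))\<^sup>2 \<le> M' * a" if M': "0 < M'" "M \<le> M'" for M'
  proof -
    note gap = convex_smooth_gradient_gap[OF lower upper'[OF M'(2)] M'(1)]
    have "(norm (G x - G y))\<^sup>2 = (norm (G y - G x))\<^sup>2" by (simp add: norm_minus_commute)
    then have "(norm (G y - G x))\<^sup>2 / M' \<le> a"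
      using gap[of x y] gap[of y x] inner_swap by (simp add: field_simps)
    then show ?thesis using M' by (simp add: field_simps)
  qed
  show ?thesis
    unfolding a_def[symmetric]
  proof (rule field_le_epsilon)
    fix e :: real assume e: "0 < e"
    have "0 < e / (a + 1)" using e a0 by simp
    then have "(norm (G y - G x))\<^sup>2 \<le> (M + e / (a + 1)) * a"
      using M by (intro bound) auto
    also have "\<dots> \<le> M * a + e"
      using e a0 by (simp add: field_simps)
    finally show "(norm (G y - G x))\<^sup>2 \<le> M * a + e" .
  qed
qed

lemma strongly_convex_on_above_tangent:
  fixes f :: "'a::real_inner \<Rightarrow> real"
  assumes d: "\<And>z. (f has_derivative (\<lambda>h. G z \<bullet> h)) (at z)"
    and sc: "strongly_convex_on UNIV \<mu> f"
  shows "f z - \<mu> / 2 * (norm z)\<^sup>2 + (G z - \<mu> *\<^sub>R z) \<bullet> (w - z) \<le> f w - \<mu> / 2 * (norm w)\<^sup>2"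
proof (rule convex_on_imp_above_tangent_gradient)
  show "convex_on UNIV (\<lambda>z. f z - \<mu> / 2 * (norm z)\<^sup>2)"
    using sc unfolding strongly_convex_on_def .
  fix z
  have "((\<lambda>z. f z - \<mu> / 2 * (z \<bullet> z)) has_derivative (\<lambda>h. G z \<bullet> h - \<mu> / 2 * (h \<bullet> z + z \<bullet> h))) (at z)"
    by (auto intro!: derivative_eq_intros d)
  then show "((\<lambda>z. f z - \<mu> / 2 * (norm z)\<^sup>2) has_derivative (\<lambda>h. (G z - \<mu> *\<^sub>R z) \<bullet> h)) (at z)"
    unfolding power2_norm_eq_inner
    by (rule has_derivative_eq_rhs) (auto simp: fun_eq_iff inner_diff_left inner_commute algebra_simps)
qed

lemma strongly_convex_gradient_monotone:
  fixes f :: "'a::real_inner \<Rightarrow> real"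
  assumes d: "\<And>z. (f has_derivative (\<lambda>h. G z \<bullet> h)) (at z)"
    and sc: "strongly_convex_on UNIV \<mu> f"
  shows "\<mu> * (norm (x - y))\<^sup>2 \<le> (G x - G y) \<bullet> (x - y)"
proof -
  have "(G x - \<mu> *\<^sub>R x) \<bullet> (y - x) + (G y - \<mu> *\<^sub>R y) \<bullet> (x - y) \<le> 0"
    using strongly_convex_on_above_tangent[OF d sc, of x y]
      strongly_convex_on_above_tangent[OF d sc, of y x] by linarith
  then show ?thesis
    by (simp add: power2_norm_eq_inner inner_diff_left inner_diff_right inner_commute algebra_simps)
qed

lemma strongly_convex_modulus_le_lipschitz:
  fixes f :: "'a::euclidean_space \<Rightarrow> real"
  assumes d: "\<And>z. (f has_derivative (\<lambda>h. G z \<bullet> h)) (at z)"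
    and sc: "strongly_convex_on UNIV \<mu> f"
    and lip: "\<And>z w. norm (G z - G w) \<le> L * norm (z - w)"
  shows "\<mu> \<le> L"
proof -
  obtain b :: 'a where b: "b \<in> Basis" using nonempty_Basis by blast
  have "\<mu> * (norm (b - 0))\<^sup>2 \<le> (G b - G 0) \<bullet> (b - 0)"
    by (rule strongly_convex_gradient_monotone[OF d sc])
  also have "\<dots> \<le> norm (G b - G 0) * norm (b - 0)" by (rule norm_cauchy_schwarz)
  also have "\<dots> \<le> L * norm (b - 0) * norm (b - 0)"
    by (rule mult_right_mono[OF lip]) simp
  finally show ?thesis using b by simp
qed

lemma strongly_convex_gradient_cocoercive:
  fixes f :: "'a::real_inner \<Rightarrow> real"
  assumes d: "\<And>z. (f has_derivative (\<lambda>h. G z \<bullet> h)) (at z)"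
    and sc: "strongly_convex_on UNIV \<mu> f"
    and lip: "\<And>z w. norm (G z - G w) \<le> L * norm (z - w)"
    and \<mu>L: "\<mu> \<le> L"
  shows "(norm (G x - G y))\<^sup>2 + \<mu> * L * (norm (x - y))\<^sup>2 \<le> (L + \<mu>) * ((G x - G y) \<bullet> (x - y))"
proof -
  define \<phi> where "\<phi> z = f z - \<mu> / 2 * (norm z)\<^sup>2" for z
  define Gp where "Gp z = G z - \<mu> *\<^sub>R z" for z
  have lower: "\<phi> z + Gp z \<bullet> (w - z) \<le> \<phi> w" for z w
    unfolding \<phi>_def Gp_def by (rule strongly_convex_on_above_tangent[OF d sc])
  have upper: "\<phi> w \<le> \<phi> z + Gp z \<bullet> (w - z) + (L - \<mu>) / 2 * (norm (w - z))\<^sup>2" for z w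
  proof -
    have "(norm w)\<^sup>2 = (norm z)\<^sup>2 + 2 * (z \<bullet> (w - z)) + (norm (w - z))\<^sup>2"
      using power2_norm_add[of z "w - z"] by simp
    then have "\<mu> / 2 * (norm w)\<^sup>2
        = \<mu> / 2 * (norm z)\<^sup>2 + \<mu> * (z \<bullet> (w - z)) + \<mu> / 2 * (norm (w - z))\<^sup>2"
      by (simp add: ring_distribs)
    moreover have "Gp z \<bullet> (w - z) = G z \<bullet> (w - z) - \<mu> * (z \<bullet> (w - z))"
      by (simp add: Gp_def inner_diff_left)
    moreover have "(L - \<mu>) / 2 * (norm (w - z))\<^sup>2 = L / 2 * (norm (w - z))\<^sup>2 - \<mu> / 2 * (norm (w - z))\<^sup>2"
      by (simp add: field_simps)
    ultimately show ?thesis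
      using descent_lemma[OF d lip, of w z] unfolding \<phi>_def by linarith
  qed
  define a where "a = (G x - G y) \<bullet> (x - y)"
  define b where "b = (norm (G x - G y))\<^sup>2"
  define c where "c = (norm (x - y))\<^sup>2"
  have Gp_diff: "Gp x - Gp y = (G x - G y) - \<mu> *\<^sub>R (x - y)"
    by (simp add: Gp_def algebra_simps)
  have "(norm (Gp x - Gp y))\<^sup>2 = b - 2 * \<mu> * a + \<mu>\<^sup>2 * c"
    unfolding Gp_diff power2_norm_diff_scaleR a_def b_def c_def by (simp add: inner_commute)
  moreover have "(Gp x - Gp y) \<bullet> (x - y) = a - \<mu> * c"
    unfolding Gp_diff a_def c_def by (simp add: inner_diff_left power2_norm_eq_inner)
  ultimately have "b - 2 * \<mu> * a + \<mu>\<^sup>2 * c \<le> (L - \<mu>) * (a - \<mu> * c)"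
    using convex_smooth_gradient_cocoercive[OF lower upper, of x y] \<mu>L by simp
  then show ?thesis
    unfolding a_def[symmetric] b_def[symmetric] c_def[symmetric]
    by (simp add: algebra_simps power2_eq_square)
qed

lemma gradient_step_contraction:
  fixes f :: "'a::euclidean_space \<Rightarrow> real"
  assumes d: "\<And>z. (f has_derivative (\<lambda>h. G z \<bullet> h)) (at z)"
    and sc: "strongly_convex_on UNIV \<mu> f"
    and lip: "\<And>z w. norm (G z - G w) \<le> L * norm (z - w)"
    and \<mu>: "0 < \<mu>" and \<alpha>: "0 \<le> \<alpha>" "\<alpha> \<le> 2 / (\<mu> + L)"
  shows "(norm ((x - \<alpha> *\<^sub>R G x) - (y - \<alpha> *\<^sub>R G y)))\<^sup>2
    \<le> (1 - \<alpha> * (2 * \<mu> * L / (\<mu> + L))) * (norm (x - y))\<^sup>2"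
proof -
  define a where "a = (G x - G y) \<bullet> (x - y)"
  define b where "b = (norm (G x - G y))\<^sup>2"
  define c where "c = (norm (x - y))\<^sup>2"
  have \<mu>L: "\<mu> \<le> L" by (rule strongly_convex_modulus_le_lipschitz[OF d sc lip])
  have step: "(x - \<alpha> *\<^sub>R G x) - (y - \<alpha> *\<^sub>R G y) = (x - y) - \<alpha> *\<^sub>R (G x - G y)"
    by (simp add: algebra_simps)
  have "(b + \<mu> * L * c) / (L + \<mu>) \<le> a"
    using strongly_convex_gradient_cocoercive[OF d sc lip \<mu>L, of x y] \<mu> \<mu>L
    by (simp add: a_def b_def c_def field_simps)
  then have "2 * \<alpha> * ((b + \<mu> * L * c) / (L + \<mu>)) \<le> 2 * \<alpha> * a"
    by (rule mult_left_mono) (use \<alpha> in simp)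
  then have "c - 2 * \<alpha> * a + \<alpha>\<^sup>2 * b \<le> c - 2 * \<alpha> * ((b + \<mu> * L * c) / (L + \<mu>)) + \<alpha>\<^sup>2 * b"
    by linarith
  also have "\<dots> = (1 - \<alpha> * (2 * \<mu> * L / (\<mu> + L))) * c - \<alpha> * (2 / (\<mu> + L) - \<alpha>) * b"
    by (simp add: add.commute[of \<mu> L] divide_inverse algebra_simps power2_eq_square)
  also have "\<dots> \<le> (1 - \<alpha> * (2 * \<mu> * L / (\<mu> + L))) * c"
    using \<alpha> by (simp add: b_def)
  finally show ?thesis
    unfolding step power2_norm_diff_scaleR a_def b_def c_def by (simp add: inner_commute)
qed

lemma has_derivative_minimum_gradient_zero:
  fixes f :: "'a::real_inner \<Rightarrow> real"
  assumes "(f has_derivative (\<lambda>h. G \<bullet> h)) (at x)" and "\<And>z. f x \<le> f z"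
  shows "G = 0"
proof -
  have "(\<lambda>h. G \<bullet> h) = (\<lambda>v. 0)"
    by (rule differential_zero_maxmin[of x UNIV]) (use assms in auto)
  then have "G \<bullet> G = 0" by metis
  then show ?thesis by simp
qed

lemma convex_on_sum_functions:
  assumes "finite I" "\<And>i. i \<in> I \<Longrightarrow> convex_on S (f i)" and "convex S"
  shows "convex_on S (\<lambda>x. \<Sum>i\<in>I. f i x)"
  using assms by (induction I rule: finite_induct) (auto simp: convex_on_const)

lemma avg_real: "avg (a :: 'n::finite \<Rightarrow> real) = (\<Sum>i\<in>UNIV. a i) / real CARD('n)"
  by (simp add: avg_def)

lemma avg_diff: "avg (\<lambda>i. a i - b i) = avg a - avg b"
  by (simp add: avg_def sum_subtractf scaleR_diff_right)

lemma avg_scaleR: "avg (\<lambda>i. c *\<^sub>R a i) = c *\<^sub>R avg a"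
  by (simp add: avg_def scaleR_sum_right)

lemma inner_avg_left: "avg a \<bullet> h = avg (\<lambda>i. a i \<bullet> h)"
  by (simp add: avg_def inner_sum_left)

lemma avg_mono: "(\<And>i. a i \<le> b i) \<Longrightarrow> avg a \<le> avg (b :: 'n::finite \<Rightarrow> real)"
  by (simp add: avg_real divide_right_mono sum_mono)

lemma avg_const: "avg (\<lambda>i::'n::finite. c) = c"
  by (simp add: avg_def sum_constant_scaleR)

lemma norm_avg_le: "norm (avg a) \<le> avg (\<lambda>i. norm (a i))"
  unfolding avg_def by (simp add: norm_sum divide_right_mono)

lemma has_derivative_avg:
  assumes "\<And>i. (F i has_derivative F' i) net"
  shows "((\<lambda>z. avg (\<lambda>i. F i z)) has_derivative (\<lambda>h. avg (\<lambda>i. F' i h))) net"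
  unfolding avg_def by (intro has_derivative_scaleR_right has_derivative_sum assms)

lemma strongly_convex_on_avg:
  fixes \<mu> :: "'i::finite \<Rightarrow> real"
  assumes "convex S" and "\<And>i. strongly_convex_on S (\<mu> i) (f i)"
  shows "strongly_convex_on S (avg \<mu>) (\<lambda>z. avg (\<lambda>i. f i z))"
proof -
  have "convex_on S (\<lambda>z. (1 / real CARD('i)) * (\<Sum>i\<in>UNIV. f i z - \<mu> i / 2 * (norm z)\<^sup>2))"
    using assms by (intro convex_on_cmul convex_on_sum_functions) (auto simp: strongly_convex_on_def)
  moreover have "(1 / real CARD('i)) * (\<Sum>i\<in>UNIV. f i z - \<mu> i / 2 * (norm z)\<^sup>2)
      = avg (\<lambda>i. f i z) - avg \<mu> / 2 * (norm z)\<^sup>2" for z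
  proof -
    have "(\<Sum>i\<in>UNIV. f i z - \<mu> i / 2 * (norm z)\<^sup>2) = (\<Sum>i\<in>UNIV. f i z) - (\<Sum>i\<in>UNIV. \<mu> i) / 2 * (norm z)\<^sup>2"
      by (simp add: sum_subtractf sum_distrib_right sum_divide_distrib)
    then show ?thesis by (simp add: avg_real field_simps)
  qed
  ultimately show ?thesis unfolding strongly_convex_on_def by simp
qed

lemma lipschitz_avg:
  assumes "\<And>i z w. norm (g i z - g i w) \<le> L i * norm (z - w)"
  shows "norm (avg (\<lambda>i. g i z) - avg (\<lambda>i. g i w)) \<le> avg L * norm (z - w)"
proof -
  have "norm (avg (\<lambda>i. g i z) - avg (\<lambda>i. g i w)) \<le> avg (\<lambda>i. norm (g i z - g i w))"
    unfolding avg_diff[symmetric] by (rule norm_avg_le)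
  also have "\<dots> \<le> avg (\<lambda>i. L i * norm (z - w))" by (rule avg_mono) (rule assms)
  finally show ?thesis by (simp add: avg_real sum_distrib_right)
qed

lemma stack_norm_eq_norm_vec: "stack_norm z = norm (vec_lambda z)"
  by (simp add: stack_norm_def norm_vec_def L2_set_def)

lemma stack_norm_nonneg: "0 \<le> stack_norm z"
  by (simp add: stack_norm_eq_norm_vec)

lemma stack_norm_add_le: "stack_norm (\<lambda>i. z i + w i) \<le> stack_norm z + stack_norm w"
proof -
  have "vec_lambda (\<lambda>i. z i + w i) = vec_lambda z + vec_lambda w" by (simp add: vec_eq_iff)
  then show ?thesis unfolding stack_norm_eq_norm_vec by (metis norm_triangle_ineq)
qed

lemma stack_norm_diff_le: "stack_norm (\<lambda>i. z i - w i) \<le> stack_norm z + stack_norm w"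
proof -
  have "vec_lambda (\<lambda>i. z i - w i) = vec_lambda z - vec_lambda w" by (simp add: vec_eq_iff)
  then show ?thesis unfolding stack_norm_eq_norm_vec by (metis norm_triangle_ineq4)
qed

lemma power2_stack_norm: "(stack_norm z)\<^sup>2 = (\<Sum>i\<in>UNIV. (norm (z i))\<^sup>2)"
  unfolding stack_norm_def by (rule real_sqrt_pow2) (intro sum_nonneg; simp)

lemma norm_le_stack_norm: "norm (z i) \<le> stack_norm z"
  unfolding stack_norm_def by (intro real_le_rsqrt member_le_sum) auto

lemma avg_kron_apply:
  fixes M :: "real^'n::finite^'n" and y :: "'n \<Rightarrow> 'a::real_vector"
  assumes cols: "\<And>j. (\<Sum>i\<in>UNIV. M $ i $ j) = 1"
  shows "avg (kron_apply M y) = avg y"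
proof -
  have "(\<Sum>i\<in>UNIV. kron_apply M y i) = (\<Sum>j\<in>UNIV. \<Sum>i\<in>UNIV. M $ i $ j *\<^sub>R y j)"
    unfolding kron_apply_def by (rule sum.swap)
  also have "\<dots> = (\<Sum>j\<in>UNIV. y j)" by (simp add: cols flip: scaleR_sum_left)
  finally show ?thesis by (simp add: avg_def)
qed

lemma kron_apply_diff: "kron_apply M (\<lambda>i. y i - z i) = (\<lambda>i. kron_apply M y i - kron_apply M z i)"
  by (simp add: kron_apply_def fun_eq_iff scaleR_diff_right sum_subtractf)

lemma stack_norm_kron_apply_le:
  fixes M :: "real^'n::finite^'n" and y :: "'n \<Rightarrow> 'a::real_normed_vector"
  assumes nonneg: "\<And>i j. M $ i $ j \<ge> 0"
    and rows: "\<And>i. (\<Sum>j\<in>UNIV. M $ i $ j) = 1"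
    and cols: "\<And>j. (\<Sum>i\<in>UNIV. M $ i $ j) = 1"
  shows "stack_norm (kron_apply M y) \<le> stack_norm y"
proof -
  have row_bound: "(norm (kron_apply M y i))\<^sup>2 \<le> (\<Sum>j\<in>UNIV. M $ i $ j * (norm (y j))\<^sup>2)" for i
  proof -
    have "norm (kron_apply M y i) \<le> (\<Sum>j\<in>UNIV. M $ i $ j * norm (y j))"
      unfolding kron_apply_def using norm_sum[of "\<lambda>j. M $ i $ j *\<^sub>R y j" UNIV] by (simp add: nonneg)
    then have "(norm (kron_apply M y i))\<^sup>2 \<le> (\<Sum>j\<in>UNIV. M $ i $ j * norm (y j))\<^sup>2"
      by (rule power_mono) simp
    also have "\<dots> \<le> (\<Sum>j\<in>UNIV. M $ i $ j * (norm (y j))\<^sup>2)"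
      using convex_on_sum[OF _ _ convex_power2, of UNIV "\<lambda>j. M $ i $ j" "\<lambda>j. norm (y j)"]
      by (simp add: nonneg rows)
    finally show ?thesis .
  qed
  have "(stack_norm (kron_apply M y))\<^sup>2 \<le> (\<Sum>i\<in>UNIV. \<Sum>j\<in>UNIV. M $ i $ j * (norm (y j))\<^sup>2)"
    unfolding power2_stack_norm by (rule sum_mono[OF row_bound])
  also have "\<dots> = (\<Sum>j\<in>UNIV. (\<Sum>i\<in>UNIV. M $ i $ j) * (norm (y j))\<^sup>2)"
    by (subst sum.swap) (simp add: sum_distrib_right)
  also have "\<dots> = (stack_norm y)\<^sup>2" by (simp add: cols power2_stack_norm)
  finally show ?thesis by (rule power2_le_imp_le) (rule stack_norm_nonneg)
qed

lemma matpow_nonneg: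
  assumes "\<And>i j. W $ i $ j \<ge> 0"
  shows "matpow W t $ i $ j \<ge> 0"
  using assms by (induction t arbitrary: i j) (auto simp: mat_def matrix_matrix_mult_def intro!: sum_nonneg)

lemma matpow_row_sum:
  assumes "\<And>i. (\<Sum>j\<in>UNIV. W $ i $ j) = 1"
  shows "(\<Sum>j\<in>UNIV. matpow W t $ i $ j) = 1"
proof (induction t arbitrary: i)
  case (Suc t)
  have "(\<Sum>j\<in>UNIV. matpow W (Suc t) $ i $ j) = (\<Sum>k\<in>UNIV. W $ i $ k * (\<Sum>j\<in>UNIV. matpow W t $ k $ j))"
    by (simp add: matrix_matrix_mult_def sum_distrib_left) (rule sum.swap)
  then show ?case by (simp add: Suc assms)
qed (simp add: mat_def)

lemma matpow_col_sum:
  assumes "\<And>j. (\<Sum>i\<in>UNIV. W $ i $ j) = 1"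
  shows "(\<Sum>i\<in>UNIV. matpow W t $ i $ j) = 1"
proof (induction t arbitrary: j)
  case (Suc t)
  have "(\<Sum>i\<in>UNIV. matpow W (Suc t) $ i $ j) = (\<Sum>k\<in>UNIV. (\<Sum>i\<in>UNIV. W $ i $ k) * matpow W t $ k $ j)"
    by (simp add: matrix_matrix_mult_def sum_distrib_right) (rule sum.swap)
  then show ?case by (simp add: Suc assms)
qed (simp add: mat_def)

section \<open>Spectral gap of a symmetric stochastic matrix\<close>

lemma symmetric_matrix_inner:
  fixes W :: "real^'n^'n"
  assumes "transpose W = W"
  shows "(W *v u) \<bullet> v = u \<bullet> (W *v v)"
  by (metis assms dot_lmul_matrix transpose_matrix_vector)

lemma row_stochastic_mult_ones:
  fixes W :: "real^'n^'n"
  assumes "\<And>i. (\<Sum>j\<in>UNIV. W $ i $ j) = 1"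
  shows "W *v vec 1 = vec 1"
  using assms by (simp add: matrix_vector_mult_def vec_eq_iff)

lemma inner_vec_ones: "(1 :: real^'n) \<bullet> 1 = real CARD('n)"
  by (simp add: inner_vec_def)

lemma fixed_vectors_eq_span_ones:
  fixes W :: "real^'n^'n"
  assumes rows: "\<And>i. (\<Sum>j\<in>UNIV. W $ i $ j) = 1" and simple: "dim {v. W *v v = v} = 1"
  shows "{v. W *v v = v} = span {vec 1}"
proof -
  have subspace: "subspace {v :: real^'n. W *v v = v}"
    unfolding subspace_def by (simp add: matrix_vector_right_distrib matrix_vector_mult_scaleR)
  have "vec 1 \<in> {v. W *v v = v}" using row_stochastic_mult_ones[OF rows] by simp
  moreover have "(vec 1 :: real^'n) \<noteq> 0" by (simp add: vec_eq_iff)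
  ultimately show ?thesis
    using subspace_dim_equal[of "span {vec 1}" "{v. W *v v = v}"] subspace simple
    by (auto simp: span_minimal)
qed

lemma subspace_max_gain_vector:
  fixes W :: "real^'n^'n"
  assumes S: "subspace S" and u: "u \<in> S" "u \<noteq> 0"
  obtains v where "v \<in> S" "norm v = 1"
    "\<And>w. w \<in> S \<Longrightarrow> (norm (W *v w))\<^sup>2 \<le> (norm (W *v v))\<^sup>2 * (norm w)\<^sup>2"
proof -
  define K where "K = S \<inter> sphere 0 1"
  have "compact K"
    unfolding K_def using closed_subspace[OF S] by (intro closed_Int_compact compact_sphere)
  moreover have "(1 / norm u) *\<^sub>R u \<in> K"
    using u subspace_scale[OF S] by (simp add: K_def)
  moreover have "continuous_on K (\<lambda>w. (norm (W *v w))\<^sup>2)"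
    by (intro continuous_intros linear_continuous_on matrix_vector_mul_linear)
  ultimately obtain v where v: "v \<in> K" and max: "\<And>w. w \<in> K \<Longrightarrow> (norm (W *v w))\<^sup>2 \<le> (norm (W *v v))\<^sup>2"
    using continuous_attains_sup[of K "\<lambda>w. (norm (W *v w))\<^sup>2"] by blast
  have "(norm (W *v w))\<^sup>2 \<le> (norm (W *v v))\<^sup>2 * (norm w)\<^sup>2" if w: "w \<in> S" for w
  proof (cases "w = 0")
    case False
    have "(1 / norm w) *\<^sub>R w \<in> K" using w False subspace_scale[OF S] by (simp add: K_def)
    from max[OF this] False show ?thesis
      by (simp add: matrix_vector_mult_scaleR power_divide field_simps)
  qed simp
  then show thesis using that v by (auto simp: K_def)
qed

lemma quadratic_nonpos_imp_linear_coeff_zero: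
  fixes c d :: real
  assumes "\<And>s. 2 * s * c + s\<^sup>2 * d \<le> 0"
  shows "c = 0"
proof (rule ccontr)
  assume c: "c \<noteq> 0"
  define e where "e = 1 / (\<bar>d\<bar> + 1)"
  have e: "0 < e" "e * \<bar>d\<bar> < 1" by (simp_all add: e_def field_simps)
  then have "0 < 2 + e * d" using mult_left_mono[of "- \<bar>d\<bar>" d e] by linarith
  then have "0 < e * c\<^sup>2 * (2 + e * d)" using e c by simp
  also have "\<dots> = 2 * (e * c) * c + (e * c)\<^sup>2 * d" by (simp add: power2_eq_square algebra_simps)
  finally show False using assms[of "e * c"] by simp
qed

lemma max_gain_vector_eigenvector:
  fixes W :: "real^'n^'n"
  assumes sym: "transpose W = W" and S: "subspace S" and inv: "\<And>w. w \<in> S \<Longrightarrow> W *v w \<in> S"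
    and v: "v \<in> S" "norm v = 1"
    and max: "\<And>w. w \<in> S \<Longrightarrow> (norm (W *v w))\<^sup>2 \<le> (norm (W *v v))\<^sup>2 * (norm w)\<^sup>2"
  shows "W *v (W *v v) = (norm (W *v v))\<^sup>2 *\<^sub>R v"
proof -
  define lam where "lam = (norm (W *v v))\<^sup>2"
  \<comment> \<open>First variation of the Rayleigh quotient at the maximiser \<open>v\<close>.\<close>
  have orth: "(W *v (W *v v)) \<bullet> z = 0" if z: "z \<in> S" "z \<bullet> v = 0" for z
  proof -
    have "2 * s * ((W *v v) \<bullet> (W *v z)) + s\<^sup>2 * ((norm (W *v z))\<^sup>2 - lam * (norm z)\<^sup>2) \<le> 0" for s
    proof -
      have "(norm (v + s *\<^sub>R z))\<^sup>2 = 1 + s\<^sup>2 * (norm z)\<^sup>2"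
        using v z by (simp add: power2_norm_add inner_commute power_mult_distrib)
      moreover have "(norm (W *v (v + s *\<^sub>R z)))\<^sup>2
          = lam + 2 * s * ((W *v v) \<bullet> (W *v z)) + s\<^sup>2 * (norm (W *v z))\<^sup>2"
        by (simp add: lam_def matrix_vector_right_distrib matrix_vector_mult_scaleR
            power2_norm_add power_mult_distrib)
      moreover have "v + s *\<^sub>R z \<in> S" using S v z by (simp add: subspace_add subspace_scale)
      ultimately show ?thesis using max[of "v + s *\<^sub>R z"] by (simp add: lam_def algebra_simps)
    qed
    then have "(W *v v) \<bullet> (W *v z) = 0" by (rule quadratic_nonpos_imp_linear_coeff_zero)
    then show ?thesis by (simp add: symmetric_matrix_inner[OF sym])
  qed
  define r where "r = W *v (W *v v) - lam *\<^sub>R v"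
  have rS: "r \<in> S" unfolding r_def using S v inv by (simp add: subspace_diff subspace_scale)
  have "(W *v (W *v v)) \<bullet> v = (W *v v) \<bullet> (W *v v)"
    using symmetric_matrix_inner[OF sym, of "W *v v" v] by (simp add: inner_commute)
  then have rv: "r \<bullet> v = 0"
    using v by (simp add: r_def lam_def inner_diff_left power2_norm_eq_inner norm_eq_1)
  have "r \<bullet> r = 0"
    using orth[OF rS rv] rv by (simp add: r_def inner_diff_left inner_commute)
  then show ?thesis by (simp add: r_def lam_def)
qed

lemma eigenvector_from_square:
  fixes W :: "real^'n^'n"
  assumes S: "subspace S" and inv: "\<And>w. w \<in> S \<Longrightarrow> W *v w \<in> S" and v: "v \<in> S" "v \<noteq> 0"
    and sq: "W *v (W *v v) = (m * m) *\<^sub>R v"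
  obtains u lam where "u \<in> S" "u \<noteq> 0" "W *v u = lam *\<^sub>R u" "\<bar>lam\<bar> = \<bar>m\<bar>"
proof (cases "W *v v + m *\<^sub>R v = 0")
  case True
  then have "W *v v = (- m) *\<^sub>R v" by (simp add: eq_neg_iff_add_eq_0)
  with v show thesis by (intro that[of v "- m"]) auto
next
  case False
  have "W *v (W *v v + m *\<^sub>R v) = m *\<^sub>R (W *v v + m *\<^sub>R v)"
    using sq by (simp add: matrix_vector_right_distrib matrix_vector_mult_scaleR algebra_simps)
  moreover have "W *v v + m *\<^sub>R v \<in> S" using S inv v by (simp add: subspace_add subspace_scale)
  ultimately show thesis using that False by blast
qed

lemma norm_mult_le_on_orth_ones:
  fixes W :: "real^'n^'n"
  assumes sym: "transpose W = W"
    and rows: "\<And>i. (\<Sum>j\<in>UNIV. W $ i $ j) = 1"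
    and simple: "dim {v. W *v v = v} = 1"
    and beta_bound: "\<And>lam. mat_eigenvalue W lam \<Longrightarrow> lam \<noteq> 1 \<Longrightarrow> \<bar>lam\<bar> \<le> \<beta>"
    and u: "u \<bullet> vec 1 = 0"
  shows "norm (W *v u) \<le> \<beta> * norm u"
proof (cases "u = 0")
  case False
  define S where "S = {w :: real^'n. w \<bullet> vec 1 = 0}"
  have S: "subspace S" by (simp add: S_def subspace_def inner_add_left)
  have inv: "W *v w \<in> S" if "w \<in> S" for w
    using that symmetric_matrix_inner[OF sym, of w "vec 1"] row_stochastic_mult_ones[OF rows]
    by (simp add: S_def)
  obtain v where v: "v \<in> S" "norm v = 1"
    and max: "\<And>w. w \<in> S \<Longrightarrow> (norm (W *v w))\<^sup>2 \<le> (norm (W *v v))\<^sup>2 * (norm w)\<^sup>2"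
    using subspace_max_gain_vector[OF S, of u] u False by (auto simp: S_def)
  define m where "m = norm (W *v v)"
  have "W *v (W *v v) = (m * m) *\<^sub>R v"
    using max_gain_vector_eigenvector[OF sym S inv v max] by (simp add: m_def power2_eq_square)
  moreover have "v \<noteq> 0" using v by auto
  ultimately obtain w lam where w: "w \<in> S" "w \<noteq> 0" "W *v w = lam *\<^sub>R w"
    and lam: "\<bar>lam\<bar> = \<bar>m\<bar>"
    using eigenvector_from_square[OF S inv v(1)] by blast
  \<comment> \<open>The eigenvalue \<open>1\<close> is excluded because its eigenvectors are the constants, which are not
    orthogonal to \<open>vec 1\<close>.\<close>
  have "lam \<noteq> 1"
  proof
    assume "lam = 1"
    then have "w \<in> span {vec 1}" using w fixed_vectors_eq_span_ones[OF rows simple] by auto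
    then obtain c where "w = c *\<^sub>R vec 1" by (auto simp: span_singleton scalar_mult_eq_scaleR)
    with w show False by (simp add: S_def inner_vec_ones)
  qed
  moreover have "mat_eigenvalue W lam"
    using w unfolding mat_eigenvalue_def by (metis scalar_mult_eq_scaleR)
  ultimately have "\<bar>lam\<bar> \<le> \<beta>" using beta_bound by blast
  then have m\<beta>: "m \<le> \<beta>" using lam by (simp add: m_def)
  have m0: "0 \<le> m" by (simp add: m_def)
  have "(norm (W *v u))\<^sup>2 \<le> m\<^sup>2 * (norm u)\<^sup>2" using max[of u] u by (simp add: S_def m_def)
  also have "\<dots> \<le> \<beta>\<^sup>2 * (norm u)\<^sup>2" using m\<beta> m0 by (intro mult_right_mono power_mono) auto
  also have "\<dots> = (\<beta> * norm u)\<^sup>2" by (simp add: power_mult_distrib)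
  finally show ?thesis
    by (rule power2_le_imp_le) (use m\<beta> m0 in auto)
qed (simp)

section \<open>Consensus error under repeated averaging\<close>

definition mean_free :: "real^'n \<Rightarrow> real^'n" where
  "mean_free v = v - ((v \<bullet> vec 1) / real CARD('n)) *\<^sub>R vec 1"

lemma mean_free_orth_ones:
  fixes v :: "real^'n"
  shows "mean_free v \<bullet> vec 1 = 0"
  by (simp add: mean_free_def inner_diff_left inner_vec_ones)

lemma norm_mean_free_le:
  fixes v :: "real^'n"
  shows "norm (mean_free v) \<le> norm v"
proof -
  have "v = mean_free v + ((v \<bullet> vec 1) / real CARD('n)) *\<^sub>R vec 1" by (simp add: mean_free_def)
  then have "(norm (mean_free v))\<^sup>2 \<le> (norm v)\<^sup>2"
    using power2_norm_add[of "mean_free v" "((v \<bullet> vec 1) / real CARD('n)) *\<^sub>R vec 1"]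
      mean_free_orth_ones[of v]
    by simp
  then show ?thesis by (rule power2_le_imp_le) simp
qed

lemma mean_free_mult_commute:
  fixes W :: "real^'n^'n"
  assumes sym: "transpose W = W" and rows: "\<And>i. (\<Sum>j\<in>UNIV. W $ i $ j) = 1"
  shows "W *v mean_free v = mean_free (W *v v)"
  using symmetric_matrix_inner[OF sym, of v "vec 1"] row_stochastic_mult_ones[OF rows]
  by (simp add: mean_free_def matrix_vector_mult_diff_distrib matrix_vector_mult_scaleR)

lemma norm_mean_free_matpow_le:
  fixes W :: "real^'n^'n"
  assumes sym: "transpose W = W"
    and rows: "\<And>i. (\<Sum>j\<in>UNIV. W $ i $ j) = 1"
    and simple: "dim {v. W *v v = v} = 1"
    and beta_bound: "\<And>lam. mat_eigenvalue W lam \<Longrightarrow> lam \<noteq> 1 \<Longrightarrow> \<bar>lam\<bar> \<le> \<beta>"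
    and \<beta>: "0 \<le> \<beta>"
  shows "norm (mean_free (matpow W t *v v)) \<le> \<beta> ^ t * norm (mean_free v)"
proof (induction t)
  case (Suc t)
  have "mean_free (matpow W (Suc t) *v v) = W *v mean_free (matpow W t *v v)"
    by (simp add: mean_free_mult_commute[OF sym rows] matrix_vector_mul_assoc)
  also have "norm \<dots> \<le> \<beta> * norm (mean_free (matpow W t *v v))"
    by (rule norm_mult_le_on_orth_ones[OF sym rows simple beta_bound mean_free_orth_ones])
  also have "\<dots> \<le> \<beta> * (\<beta> ^ t * norm (mean_free v))" using Suc \<beta> by (rule mult_left_mono)
  finally show ?case by simp
qed simp

text \<open>A stacked vector \<open>y\<close> is sliced into one real vector per basis direction \<open>b\<close> of the agents'
  space; \<open>W\<^sup>t \<otimes> I\<^sub>p\<close> acts on every slice as \<open>W\<^sup>t\<close>.\<close>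

definition coord_slice :: "('n::finite \<Rightarrow> 'a::euclidean_space) \<Rightarrow> 'a \<Rightarrow> real^'n" where
  "coord_slice y b = (\<chi> i. y i \<bullet> b)"

lemma coord_slice_kron_apply: "coord_slice (kron_apply M y) b = M *v coord_slice y b"
  by (simp add: vec_eq_iff coord_slice_def kron_apply_def matrix_vector_mult_def inner_sum_left)

lemma coord_slice_diff_avg:
  "coord_slice (\<lambda>i. y i - avg y) b = mean_free (coord_slice y b)"
  by (simp add: vec_eq_iff coord_slice_def mean_free_def avg_def inner_diff_left inner_sum_left
      inner_vec_def)

lemma power2_norm_eq_sum_Basis: "(norm (x::'a::euclidean_space))\<^sup>2 = (\<Sum>b\<in>Basis. (x \<bullet> b)\<^sup>2)"
  unfolding power2_norm_eq_inner by (simp only: power2_eq_square euclidean_inner[of x x])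

lemma power2_stack_norm_coord_slices:
  fixes z :: "'n::finite \<Rightarrow> 'a::euclidean_space"
  shows "(stack_norm z)\<^sup>2 = (\<Sum>b\<in>Basis. (norm (coord_slice z b))\<^sup>2)"
proof -
  have "(stack_norm z)\<^sup>2 = (\<Sum>i\<in>UNIV. \<Sum>b\<in>Basis. (z i \<bullet> b)\<^sup>2)"
    unfolding power2_stack_norm power2_norm_eq_sum_Basis ..
  also have "\<dots> = (\<Sum>b\<in>Basis. \<Sum>i\<in>UNIV. (z i \<bullet> b)\<^sup>2)" by (rule sum.swap)
  finally show ?thesis
    unfolding power2_norm_eq_inner by (simp add: coord_slice_def inner_vec_def power2_eq_square)
qed

lemma stack_norm_consensus_error_le:
  fixes W :: "real^'n::finite^'n" and y :: "'n \<Rightarrow> 'a::euclidean_space"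
  assumes sym: "transpose W = W"
    and rows: "\<And>i. (\<Sum>j\<in>UNIV. W $ i $ j) = 1"
    and simple: "dim {v. W *v v = v} = 1"
    and beta_bound: "\<And>lam. mat_eigenvalue W lam \<Longrightarrow> lam \<noteq> 1 \<Longrightarrow> \<bar>lam\<bar> \<le> \<beta>"
    and \<beta>: "0 \<le> \<beta>"
  fixes t :: nat
  defines "x \<equiv> kron_apply (matpow W t) y"
  shows "stack_norm (\<lambda>i. x i - avg x) \<le> \<beta> ^ t * stack_norm y"
proof -
  have "norm (mean_free (matpow W t *v coord_slice y b)) \<le> \<beta> ^ t * norm (coord_slice y b)" for b
    using norm_mean_free_matpow_le[OF sym rows simple beta_bound \<beta>, of t "coord_slice y b"]
      norm_mean_free_le[of "coord_slice y b"] \<beta>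
    by (meson mult_left_mono order_trans zero_le_power)
  then have "(stack_norm (\<lambda>i. x i - avg x))\<^sup>2 \<le> (\<Sum>b\<in>Basis. (\<beta> ^ t * norm (coord_slice y b))\<^sup>2)"
    unfolding power2_stack_norm_coord_slices coord_slice_diff_avg x_def coord_slice_kron_apply
    by (intro sum_mono power_mono) auto
  also have "\<dots> = (\<beta> ^ t * stack_norm y)\<^sup>2"
    by (simp add: power_mult_distrib power2_stack_norm_coord_slices sum_distrib_left)
  finally show ?thesis
    by (rule power2_le_imp_le) (simp add: \<beta> stack_norm_nonneg)
qed

lemma contraction_stays_in_ball:
  fixes a b R U \<nu> :: real
  assumes \<nu>: "0 < \<nu>" "\<nu> \<le> 1" and U: "0 \<le> U" and R: "4 / \<nu> * U \<le> R"
    and b: "0 \<le> b" "b \<le> R + 2 * U" and a: "a\<^sup>2 \<le> (1 - \<nu>) * b\<^sup>2"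
  shows "a \<le> R"
proof -
  have "a\<^sup>2 \<le> (1 - \<nu>) * (R + 2 * U)\<^sup>2"
    using a b \<nu> by (meson diff_ge_0_iff_ge mult_left_mono order_trans power_mono)
  also have "\<dots> \<le> ((1 - \<nu> / 2) * (R + 2 * U))\<^sup>2"
  proof -
    have "1 - \<nu> \<le> (1 - \<nu> / 2)\<^sup>2" by (simp add: power2_eq_square algebra_simps)
    then show ?thesis unfolding power_mult_distrib by (rule mult_right_mono) simp
  qed
  finally have "a \<le> (1 - \<nu> / 2) * (R + 2 * U)"
    by (rule power2_le_imp_le) (use \<nu> b in auto)
  also have "\<dots> \<le> R"
  proof -
    have "4 * U \<le> \<nu> * R" using R \<nu> by (simp add: field_simps)
    moreover have "0 \<le> \<nu> * U" using \<nu> U by simp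
    ultimately show ?thesis by (simp add: algebra_simps)
  qed
  finally show ?thesis .
qed

lemma perturbed_contraction_tendsto_zero:
  fixes a b :: "nat \<Rightarrow> real"
  assumes a0: "\<And>k. 0 \<le> a k" and rec: "\<And>k. a (Suc k) \<le> q * a k + b k"
    and q: "0 \<le> q" "q < 1" and b: "b \<longlonglongrightarrow> 0"
  shows "a \<longlonglongrightarrow> 0"
proof (rule LIMSEQ_I)
  fix r :: real assume r: "0 < r"
  define e where "e = r / 3"
  have e: "0 < e" "0 < e * (1 - q)" using r q by (simp_all add: e_def)
  from LIMSEQ_D[OF b e(2)] obtain N1 where N1: "\<And>k. k \<ge> N1 \<Longrightarrow> \<bar>b k\<bar> < e * (1 - q)" by auto
  have "(\<lambda>m. q ^ m * a N1) \<longlonglongrightarrow> 0"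
    using q by (intro tendsto_mult_left_zero LIMSEQ_power_zero) simp
  from LIMSEQ_D[OF this e(1)] obtain N2 where N2: "\<And>m. m \<ge> N2 \<Longrightarrow> \<bar>q ^ m * a N1\<bar> < e" by auto
  have tail: "a (N1 + m) \<le> q ^ m * a N1 + e" for m
  proof (induction m)
    case (Suc m)
    have "a (N1 + Suc m) \<le> q * a (N1 + m) + b (N1 + m)" using rec[of "N1 + m"] by simp
    also have "\<dots> \<le> q * (q ^ m * a N1 + e) + e * (1 - q)"
      using Suc q N1[of "N1 + m"] by (intro add_mono mult_left_mono) auto
    also have "\<dots> = q ^ Suc m * a N1 + e" by (simp add: algebra_simps)
    finally show ?case .
  qed (use e in simp)
  have "\<bar>a n\<bar> < r" if "n \<ge> N1 + N2" for n
  proof -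
    have "a n \<le> q ^ (n - N1) * a N1 + e" using tail[of "n - N1"] that by simp
    moreover have "\<bar>q ^ (n - N1) * a N1\<bar> < e" using that by (intro N2) simp
    ultimately show ?thesis using a0[of n] by (simp add: e_def abs_less_iff)
  qed
  then show "\<exists>N. \<forall>n\<ge>N. norm (a n - 0) < r" by auto
qed

section \<open>The NEAR-DGD\<open>\<^sup>+\<close> iteration\<close>

locale near_dgd =
  fixes W :: "real^'n::finite^'n"
    and f :: "'n \<Rightarrow> 'a::euclidean_space \<Rightarrow> real"
    and g :: "'n \<Rightarrow> 'a \<Rightarrow> 'a"
    and \<mu> Lc :: "'n \<Rightarrow> real"
    and \<alpha> \<beta> :: real
    and t :: "nat \<Rightarrow> nat"
    and x y :: "nat \<Rightarrow> 'n \<Rightarrow> 'a"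
    and xstar :: 'a
    and ustar :: "'n \<Rightarrow> 'a"
  assumes W_sym: "transpose W = W"
    and W_nonneg: "\<And>i j. W $ i $ j \<ge> 0"
    and W_rows: "\<And>i. (\<Sum>j\<in>UNIV. W $ i $ j) = 1"
    and W_cols: "\<And>j. (\<Sum>i\<in>UNIV. W $ i $ j) = 1"
    and W_eig1_simple: "dim {v. W *v v = v} = 1"
    and beta_bound: "\<And>lam. mat_eigenvalue W lam \<Longrightarrow> lam \<noteq> 1 \<Longrightarrow> \<bar>lam\<bar> \<le> \<beta>"
    and beta_pos: "0 < \<beta>" and beta_lt1: "\<beta> < 1"
    and mu_pos: "\<And>i. 0 < \<mu> i"
    and L_pos: "\<And>i. 0 < Lc i"
    and f_grad: "\<And>i z. (f i has_derivative (\<lambda>h. g i z \<bullet> h)) (at z)"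
    and f_sconv: "\<And>i. strongly_convex_on UNIV (\<mu> i) (f i)"
    and g_lip: "\<And>i z w. norm (g i z - g i w) \<le> Lc i * norm (z - w)"
    and ustar_min: "\<And>i z. f i (ustar i) \<le> f i z"
    and xstar_min: "\<And>z. (\<Sum>i\<in>UNIV. f i xstar) \<le> (\<Sum>i\<in>UNIV. f i z)"
    and x_step: "\<And>k. x k = kron_apply (matpow W (t k)) (y k)"
    and y_step: "\<And>k i. y (Suc k) i = x k i - \<alpha> *\<^sub>R g i (x k i)"
    and alpha_pos: "0 < \<alpha>"
    and alpha_le: "\<alpha> \<le> 1 / Max (range Lc)"
    and alpha_le_c4: "\<alpha> \<le> 2 / ((\<Sum>i\<in>UNIV. \<mu> i) / real CARD('n) + (\<Sum>i\<in>UNIV. Lc i) / real CARD('n))"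
begin

definition L_max :: real where "L_max = Max (range Lc)"
definition mu_avg :: real where "mu_avg = (\<Sum>i\<in>UNIV. \<mu> i) / real CARD('n)"
definition L_avg :: real where "L_avg = (\<Sum>i\<in>UNIV. Lc i) / real CARD('n)"
definition c2 :: real where "c2 = 2 * mu_avg * L_avg / (mu_avg + L_avg)"
definition nu :: real where "nu = 2 * \<alpha> * Min (range (\<lambda>i. \<mu> i * Lc i / (\<mu> i + Lc i)))"
definition D :: real where
  "D = stack_norm (\<lambda>i. y 0 i - ustar i) + (nu + 4) / nu * stack_norm ustar"

lemma Lc_le_L_max: "Lc i \<le> L_max"
  unfolding L_max_def by (rule Max_ge) auto

lemma alpha_le_local_step: "\<alpha> \<le> 2 / (\<mu> i + Lc i)"
proof -
  have "\<mu> i \<le> Lc i" by (rule strongly_convex_modulus_le_lipschitz[OF f_grad f_sconv g_lip])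
  then have "1 / L_max \<le> 2 / (\<mu> i + Lc i)"
    using Lc_le_L_max[of i] L_pos[of i] mu_pos[of i] by (simp add: field_simps)
  then show ?thesis using alpha_le by (simp add: L_max_def)
qed

lemma nu_pos: "0 < nu"
proof -
  have "Min (range (\<lambda>i. \<mu> i * Lc i / (\<mu> i + Lc i))) \<in> range (\<lambda>i. \<mu> i * Lc i / (\<mu> i + Lc i))"
    by (rule Min_in) auto
  then obtain i where "Min (range (\<lambda>i. \<mu> i * Lc i / (\<mu> i + Lc i))) = \<mu> i * Lc i / (\<mu> i + Lc i)"
    by blast
  moreover have "0 < \<mu> i * Lc i / (\<mu> i + Lc i)" using mu_pos[of i] L_pos[of i] by simp
  ultimately show ?thesis
    using alpha_pos unfolding nu_def by (metis mult_pos_pos zero_less_numeral)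
qed

lemma nu_le_local_rate: "nu \<le> \<alpha> * (2 * \<mu> i * Lc i / (\<mu> i + Lc i))"
proof -
  have "Min (range (\<lambda>i. \<mu> i * Lc i / (\<mu> i + Lc i))) \<le> \<mu> i * Lc i / (\<mu> i + Lc i)"
    by (rule Min_le) auto
  then have "nu \<le> 2 * \<alpha> * (\<mu> i * Lc i / (\<mu> i + Lc i))"
    unfolding nu_def using alpha_pos by (intro mult_left_mono) auto
  then show ?thesis by (simp add: mult_ac)
qed

lemma nu_le_1: "nu \<le> 1"
proof -
  fix i
  have "0 \<le> 2 * \<mu> i * Lc i / (\<mu> i + Lc i)" using mu_pos[of i] L_pos[of i] by simp
  from mult_right_mono[OF alpha_le_local_step[of i] this]
  have "nu \<le> 2 / (\<mu> i + Lc i) * (2 * \<mu> i * Lc i / (\<mu> i + Lc i))"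
    using nu_le_local_rate[of i] by linarith
  also have "\<dots> = 4 * \<mu> i * Lc i / (\<mu> i + Lc i)\<^sup>2" by (simp add: power2_eq_square)
  also have "\<dots> \<le> 1"
  proof -
    have "4 * \<mu> i * Lc i \<le> (\<mu> i + Lc i)\<^sup>2"
      using sum_squares_bound[of "\<mu> i" "Lc i"] by (simp add: power2_eq_square algebra_simps)
    then show ?thesis using mu_pos[of i] L_pos[of i] by simp
  qed
  finally show ?thesis .
qed

lemma local_step_contraction:
  "(norm (z - \<alpha> *\<^sub>R g i z - ustar i))\<^sup>2 \<le> (1 - nu) * (norm (z - ustar i))\<^sup>2"
proof -
  have "g i (ustar i) = 0"
    by (rule has_derivative_minimum_gradient_zero[OF f_grad ustar_min])
  then have "(norm (z - \<alpha> *\<^sub>R g i z - ustar i))\<^sup>2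
      \<le> (1 - \<alpha> * (2 * \<mu> i * Lc i / (\<mu> i + Lc i))) * (norm (z - ustar i))\<^sup>2"
    using gradient_step_contraction[OF f_grad f_sconv g_lip mu_pos, of \<alpha> i z "ustar i"]
      alpha_pos alpha_le_local_step[of i] by simp
  also have "\<dots> \<le> (1 - nu) * (norm (z - ustar i))\<^sup>2"
    using nu_le_local_rate[of i] by (intro mult_right_mono) auto
  finally show ?thesis .
qed

definition fbar :: "'a \<Rightarrow> real" where "fbar z = avg (\<lambda>i. f i z)"
definition gbar :: "'a \<Rightarrow> 'a" where "gbar z = avg (\<lambda>i. g i z)"

lemma fbar_has_derivative: "(fbar has_derivative (\<lambda>h. gbar z \<bullet> h)) (at z)"
  unfolding fbar_def[abs_def] gbar_def inner_avg_left by (intro has_derivative_avg f_grad)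

lemma gbar_xstar: "gbar xstar = 0"
proof (rule has_derivative_minimum_gradient_zero[OF fbar_has_derivative])
  show "fbar xstar \<le> fbar z" for z
    using xstar_min[of z] by (simp add: fbar_def avg_real divide_right_mono)
qed

lemma mu_avg_pos: "0 < mu_avg"
  using mu_pos by (simp add: mu_avg_def sum_pos)

lemma L_avg_pos: "0 < L_avg"
  using L_pos by (simp add: L_avg_def sum_pos)

lemma mean_step_contraction:
  "(norm (z - \<alpha> *\<^sub>R gbar z - xstar))\<^sup>2 \<le> (1 - \<alpha> * c2) * (norm (z - xstar))\<^sup>2"
proof -
  have sc: "strongly_convex_on UNIV mu_avg fbar"
    using strongly_convex_on_avg[OF convex_UNIV f_sconv]
    by (simp add: fbar_def[abs_def] mu_avg_def avg_real)
  have lip: "norm (gbar z - gbar w) \<le> L_avg * norm (z - w)" for z w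
    using lipschitz_avg[OF g_lip] by (simp add: gbar_def L_avg_def avg_real)
  from gradient_step_contraction[OF fbar_has_derivative sc lip mu_avg_pos, of \<alpha> z xstar]
  show ?thesis
    using alpha_pos alpha_le_c4 by (simp add: gbar_xstar c2_def mu_avg_def L_avg_def)
qed

lemma avg_x_eq_avg_y: "avg (x k) = avg (y k)"
  unfolding x_step by (rule avg_kron_apply) (rule matpow_col_sum[OF W_cols])

lemma stack_norm_kron_apply_matpow_le: "stack_norm (kron_apply (matpow W s) z) \<le> stack_norm z"
  by (intro stack_norm_kron_apply_le matpow_nonneg matpow_row_sum matpow_col_sum W_nonneg W_rows W_cols)

lemma stack_dist_ustar_le:
  "stack_norm (\<lambda>i. y k i - ustar i) \<le> stack_norm (\<lambda>i. y 0 i - ustar i) + 4 / nu * stack_norm ustar"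
proof (induction k)
  case (Suc k)
  let ?M = "matpow W (t k)"
  have "stack_norm (\<lambda>i. x k i - ustar i)
      = stack_norm (\<lambda>i. kron_apply ?M (\<lambda>i. y k i - ustar i) i + (kron_apply ?M ustar i - ustar i))"
    unfolding x_step kron_apply_diff by simp
  also have "\<dots> \<le> stack_norm (kron_apply ?M (\<lambda>i. y k i - ustar i))
      + stack_norm (\<lambda>i. kron_apply ?M ustar i - ustar i)"
    by (rule stack_norm_add_le)
  also have "\<dots> \<le> stack_norm (\<lambda>i. y k i - ustar i) + (stack_norm (kron_apply ?M ustar) + stack_norm ustar)"
    by (intro add_mono stack_norm_kron_apply_matpow_le stack_norm_diff_le)
  also have "\<dots> \<le> stack_norm (\<lambda>i. y k i - ustar i) + (stack_norm ustar + stack_norm ustar)"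
    using stack_norm_kron_apply_matpow_le[of "t k" ustar] by simp
  finally have "stack_norm (\<lambda>i. x k i - ustar i)
      \<le> stack_norm (\<lambda>i. y 0 i - ustar i) + 4 / nu * stack_norm ustar + 2 * stack_norm ustar"
    using Suc by simp
  moreover have "(stack_norm (\<lambda>i. y (Suc k) i - ustar i))\<^sup>2 \<le> (1 - nu) * (stack_norm (\<lambda>i. x k i - ustar i))\<^sup>2"
    unfolding power2_stack_norm y_step sum_distrib_left by (intro sum_mono local_step_contraction)
  ultimately show ?case
    using contraction_stays_in_ball[OF nu_pos nu_le_1 stack_norm_nonneg[of ustar],
        where R = "stack_norm (\<lambda>i. y 0 i - ustar i) + 4 / nu * stack_norm ustar"]
      stack_norm_nonneg[of "\<lambda>i. y 0 i - ustar i"] stack_norm_nonneg[of "\<lambda>i. x k i - ustar i"]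
    by simp
qed (use nu_pos stack_norm_nonneg[of ustar] in simp)

lemma stack_norm_y_le_D: "stack_norm (y k) \<le> D"
proof -
  have "stack_norm (y k) \<le> stack_norm (\<lambda>i. y k i - ustar i) + stack_norm ustar"
    using stack_norm_add_le[of "\<lambda>i. y k i - ustar i" ustar] by simp
  also have "\<dots> \<le> D"
    using stack_dist_ustar_le[of k] nu_pos by (simp add: D_def field_simps)
  finally show ?thesis .
qed

lemma consensus_error_le: "stack_norm (\<lambda>i. x k i - avg (x k)) \<le> \<beta> ^ t k * D"
proof -
  have "stack_norm (\<lambda>i. x k i - avg (x k)) \<le> \<beta> ^ t k * stack_norm (y k)"
    unfolding x_step
    using stack_norm_consensus_error_le[OF W_sym W_rows W_eig1_simple beta_bound] beta_pos by simp
  also have "\<dots> \<le> \<beta> ^ t k * D"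
    using stack_norm_y_le_D beta_pos by (simp add: mult_left_mono)
  finally show ?thesis .
qed

lemma mean_gradient_error_le:
  "norm (\<alpha> *\<^sub>R avg (\<lambda>i. g i (x k i) - g i (avg (x k)))) \<le> \<alpha> * L_max * \<beta> ^ t k * D"
proof -
  have bound: "norm (g i (x k i) - g i (avg (x k))) \<le> L_max * (\<beta> ^ t k * D)" for i
  proof -
    have "norm (g i (x k i) - g i (avg (x k))) \<le> Lc i * norm (x k i - avg (x k))" by (rule g_lip)
    also have "\<dots> \<le> L_max * stack_norm (\<lambda>i. x k i - avg (x k))"
      using Lc_le_L_max[of i] L_pos[of i] norm_le_stack_norm[of "\<lambda>i. x k i - avg (x k)" i]
      by (intro mult_mono) auto
    also have "\<dots> \<le> L_max * (\<beta> ^ t k * D)"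
      using consensus_error_le Lc_le_L_max L_pos by (meson less_le_trans mult_left_mono less_imp_le)
    finally show ?thesis .
  qed
  have "avg (\<lambda>i. norm (g i (x k i) - g i (avg (x k)))) \<le> avg (\<lambda>i::'n. L_max * (\<beta> ^ t k * D))"
    by (rule avg_mono) (rule bound)
  then have "norm (avg (\<lambda>i. g i (x k i) - g i (avg (x k)))) \<le> L_max * (\<beta> ^ t k * D)"
    using norm_avg_le[of "\<lambda>i. g i (x k i) - g i (avg (x k))"] unfolding avg_const by linarith
  then show ?thesis using alpha_pos by (simp add: mult_left_mono mult.assoc)
qed

lemma mean_error_recursion:
  assumes \<delta>: "0 < \<delta>"
  shows "(norm (avg (x (Suc k)) - xstar))\<^sup>2
    \<le> (1 - \<alpha> * c2 + \<alpha> * \<delta> - \<alpha>\<^sup>2 * \<delta> * c2) * (norm (avg (x k) - xstar))\<^sup>2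
      + \<alpha> * (\<alpha> + 1 / \<delta>) * D\<^sup>2 * L_max\<^sup>2 * \<beta> ^ (2 * t k)"
proof -
  define xb where "xb = avg (x k)"
  define a where "a = xb - \<alpha> *\<^sub>R gbar xb - xstar"
  define e where "e = \<alpha> *\<^sub>R avg (\<lambda>i. g i (x k i) - g i xb)"
  have "avg (x (Suc k)) - xstar = a - e"
    unfolding avg_x_eq_avg_y y_step[abs_def] avg_diff avg_scaleR a_def e_def gbar_def xb_def
    by (simp add: algebra_simps)
  then have "(norm (avg (x (Suc k)) - xstar))\<^sup>2 \<le> (1 + \<alpha> * \<delta>) * (norm a)\<^sup>2 + (1 + 1 / (\<alpha> * \<delta>)) * (norm e)\<^sup>2"
    using power2_norm_diff_le_young[of "\<alpha> * \<delta>" a e] alpha_pos \<delta> by simp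
  also have "\<dots> \<le> (1 + \<alpha> * \<delta>) * ((1 - \<alpha> * c2) * (norm (xb - xstar))\<^sup>2)
      + (1 + 1 / (\<alpha> * \<delta>)) * (\<alpha> * L_max * \<beta> ^ t k * D)\<^sup>2"
    using alpha_pos \<delta> mean_step_contraction[of xb] mean_gradient_error_le[of k]
    unfolding a_def e_def xb_def by (intro add_mono mult_left_mono power_mono) auto
  also have "\<dots> = (1 - \<alpha> * c2 + \<alpha> * \<delta> - \<alpha>\<^sup>2 * \<delta> * c2) * (norm (xb - xstar))\<^sup>2
      + \<alpha> * (\<alpha> + 1 / \<delta>) * D\<^sup>2 * L_max\<^sup>2 * \<beta> ^ (2 * t k)"
    using alpha_pos \<delta> by (simp add: field_simps power2_eq_square power_mult power_mult_distrib)
  finally show ?thesis unfolding xb_def .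
qed

lemma beta_power_tendsto_zero:
  assumes "filterlim t at_top sequentially"
  shows "(\<lambda>k. \<beta> ^ t k) \<longlonglongrightarrow> 0"
proof -
  have "(\<lambda>s. \<beta> ^ s) \<longlonglongrightarrow> 0" by (rule LIMSEQ_power_zero) (use beta_pos beta_lt1 in simp)
  from filterlim_compose[OF this assms] show ?thesis .
qed

lemma mean_tendsto_xstar:
  assumes ac: "\<alpha> * c2 < 1" and t: "filterlim t at_top sequentially"
  shows "(\<lambda>k. avg (x k)) \<longlonglongrightarrow> xstar"
proof -
  have c2: "0 < c2" using mu_avg_pos L_avg_pos by (simp add: c2_def)
  define \<delta> where "\<delta> = c2 / 2"
  define q where "q = 1 - \<alpha> * c2 + \<alpha> * \<delta> - \<alpha>\<^sup>2 * \<delta> * c2"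
  have \<delta>: "0 < \<delta>" using c2 by (simp add: \<delta>_def)
  have q: "0 \<le> q" "q < 1"
  proof -
    have "q = (1 - \<alpha> * c2) * (1 + \<alpha> * \<delta>)" by (simp add: q_def algebra_simps power2_eq_square)
    then show "0 \<le> q" using ac alpha_pos \<delta> by simp
    have "q = 1 - \<alpha> * c2 / 2 - (\<alpha> * c2)\<^sup>2 / 2" by (simp add: q_def \<delta>_def power2_eq_square field_simps)
    moreover have "0 < \<alpha> * c2" using alpha_pos c2 by simp
    moreover have "0 \<le> (\<alpha> * c2)\<^sup>2" by simp
    ultimately show "q < 1" by linarith
  qed
  from beta_power_tendsto_zero[OF t]
  have perturbation: "(\<lambda>k. \<alpha> * (\<alpha> + 1 / \<delta>) * D\<^sup>2 * L_max\<^sup>2 * (\<beta> ^ t k)\<^sup>2) \<longlonglongrightarrow> 0"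
    by (auto intro!: tendsto_eq_intros)
  have "(\<lambda>k. (norm (avg (x k) - xstar))\<^sup>2) \<longlonglongrightarrow> 0"
  proof (rule perturbed_contraction_tendsto_zero[OF _ _ q perturbation])
    fix k
    have "(\<beta> ^ t k)\<^sup>2 = \<beta> ^ (2 * t k)" by (simp add: power_mult[symmetric] mult.commute)
    then show "(norm (avg (x (Suc k)) - xstar))\<^sup>2
        \<le> q * (norm (avg (x k) - xstar))\<^sup>2 + \<alpha> * (\<alpha> + 1 / \<delta>) * D\<^sup>2 * L_max\<^sup>2 * (\<beta> ^ t k)\<^sup>2"
      using mean_error_recursion[OF \<delta>, of k] by (simp add: q_def)
  qed simp
  from tendsto_real_sqrt[OF this]
  have "(\<lambda>k. norm (avg (x k) - xstar)) \<longlonglongrightarrow> 0" by simp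
  then show ?thesis by (simp add: tendsto_norm_zero_iff LIM_zero_iff)
qed

lemma agents_tendsto_xstar:
  assumes ac: "\<alpha> * c2 < 1" and t: "filterlim t at_top sequentially"
  shows "(\<lambda>k. x k i) \<longlonglongrightarrow> xstar"
proof -
  have "norm (x k i - xstar) \<le> \<beta> ^ t k * D + norm (avg (x k) - xstar)" for k
    using norm_triangle_ineq[of "x k i - avg (x k)" "avg (x k) - xstar"]
      norm_le_stack_norm[of "\<lambda>i. x k i - avg (x k)" i] consensus_error_le[of k]
    by simp
  moreover have "(\<lambda>k. \<beta> ^ t k * D + norm (avg (x k) - xstar)) \<longlonglongrightarrow> 0"
    using beta_power_tendsto_zero[OF t] mean_tendsto_xstar[OF ac t]
    by (auto intro!: tendsto_eq_intros simp: LIM_zero_iff tendsto_norm_zero_iff)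
  ultimately have "(\<lambda>k. norm (x k i - xstar)) \<longlonglongrightarrow> 0"
    by (auto intro: tendsto_sandwich[of "\<lambda>_. 0" _ _ "\<lambda>k. \<beta> ^ t k * D + norm (avg (x k) - xstar)"])
  then show ?thesis by (simp add: tendsto_norm_zero_iff LIM_zero_iff)
qed

end

theorem theorem3:
  fixes W :: "real^'n::finite^'n"
    and f :: "'n \<Rightarrow> 'a::euclidean_space \<Rightarrow> real"
    and g :: "'n \<Rightarrow> 'a \<Rightarrow> 'a"
    and \<mu> Lc :: "'n \<Rightarrow> real"
    and \<alpha> \<beta> :: real
    and t :: "nat \<Rightarrow> nat"
    and x y :: "nat \<Rightarrow> 'n \<Rightarrow> 'a"
    and s0 xstar :: 'a
    and ustar :: "'n \<Rightarrow> 'a"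
  assumes W_sym: "transpose W = W"
    and W_nonneg: "\<And>i j. W $ i $ j \<ge> 0"
    and W_rows: "\<And>i. (\<Sum>j\<in>UNIV. W $ i $ j) = 1"
    and W_cols: "\<And>j. (\<Sum>i\<in>UNIV. W $ i $ j) = 1"
    and W_diag: "\<And>i. W $ i $ i > 0"
    and W_connected: "\<And>i j. (i, j) \<in> {(a, b). W $ a $ b > 0}\<^sup>*"
    and W_eig1_simple: "dim {v. W *v v = v} = 1"
    and W_eig_other: "\<And>lam. mat_eigenvalue W lam \<Longrightarrow> lam \<noteq> 1 \<Longrightarrow> -1 < lam \<and> lam < 1"
    and beta_bound: "\<And>lam. mat_eigenvalue W lam \<Longrightarrow> lam \<noteq> 1 \<Longrightarrow> \<bar>lam\<bar> \<le> \<beta>"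
    and beta_attained: "\<exists>lam. mat_eigenvalue W lam \<and> lam \<noteq> 1 \<and> \<bar>lam\<bar> = \<beta>"
    and beta_pos: "0 < \<beta>" and beta_lt1: "\<beta> < 1"
    and mu_pos: "\<And>i. 0 < \<mu> i"
    and L_pos: "\<And>i. 0 < Lc i"
    and f_grad: "\<And>i z. (f i has_derivative (\<lambda>h. g i z \<bullet> h)) (at z)"
    and f_sconv: "\<And>i. strongly_convex_on UNIV (\<mu> i) (f i)"
    and g_lip: "\<And>i z w. norm (g i z - g i w) \<le> Lc i * norm (z - w)"
    and ustar_min: "\<And>i z. f i (ustar i) \<le> f i z"
    and xstar_min: "\<And>z. (\<Sum>i\<in>UNIV. f i xstar) \<le> (\<Sum>i\<in>UNIV. f i z)"
    and init: "\<And>i. y 0 i = s0"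
    and x_step: "\<And>k. x k = kron_apply (matpow W (t k)) (y k)"
    and y_step: "\<And>k i. y (Suc k) i = x k i - \<alpha> *\<^sub>R g i (x k i)"
    and alpha_pos: "0 < \<alpha>"
    and alpha_le: "\<alpha> \<le> 1 / Max (range Lc)"
    and alpha_le_c4: "\<alpha> \<le> 2 / ((\<Sum>i\<in>UNIV. \<mu> i) / real CARD('n) + (\<Sum>i\<in>UNIV. Lc i) / real CARD('n))"
  shows "let L = Max (range Lc);
             \<mu>f = (\<Sum>i\<in>UNIV. \<mu> i) / real CARD('n);
             Lf = (\<Sum>i\<in>UNIV. Lc i) / real CARD('n);
             c2 = 2 * \<mu>f * Lf / (\<mu>f + Lf);
             \<nu> = 2 * \<alpha> * Min (range (\<lambda>i. \<mu> i * Lc i / (\<mu> i + Lc i)));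
             D = stack_norm (\<lambda>i. y 0 i - ustar i) + (\<nu> + 4) / \<nu> * stack_norm ustar
         in (\<forall>\<delta>>0. \<forall>k.
               (norm (avg (x (Suc k)) - xstar))\<^sup>2
                 \<le> (1 - \<alpha> * c2 + \<alpha> * \<delta> - \<alpha>\<^sup>2 * \<delta> * c2) * (norm (avg (x k) - xstar))\<^sup>2
                   + \<alpha> * (\<alpha> + 1 / \<delta>) * D\<^sup>2 * L\<^sup>2 * \<beta> ^ (2 * t k))
          \<and> (\<alpha> * c2 < 1 \<and> strict_mono t \<and> filterlim t at_top sequentially \<longrightarrow>
               (\<lambda>k. avg (x k)) \<longlonglongrightarrow> xstar \<and> (\<forall>i. (\<lambda>k. x k i) \<longlonglongrightarrow> xstar))"
proof -
  interpret near_dgd W f g \<mu> Lc \<alpha> \<beta> t x y xstar ustar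
    by unfold_locales (fact assms)+
  show ?thesis
    unfolding Let_def L_max_def[symmetric] mu_avg_def[symmetric] L_avg_def[symmetric]
      c2_def[symmetric] nu_def[symmetric] D_def[symmetric]
    using mean_error_recursion mean_tendsto_xstar agents_tendsto_xstar by blast
qed

end
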